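(* Let $B$ be the simplicial $2$-sphere obtained from the bipyramid (the triangulation of $S^2$ with $5$ vertices and $6$ triangles) by a stellar subdivision of each of its $6$ triangles (adding a new vertex inside each triangle and joining it to the three vertices of that triangle), so that $f(B)=18$. Then $B$ has no winning strategy for the coloring game: in any play at most $4$ edges become red, hence at most $4<18/4$ triangles become green.
   Context: Coloring game on a simplicial $2$-sphere $B$: (1) choose one or two vertices of $B$ and color them red; (2) choose an edge of $B$ both of whose endpoints are currently uncolored and which, together with some already red vertex, spans a triangle of $B$; color the edge and its two endpoints red and color that triangle green. Step (2) may be repeated as long as possible. $B$ has a winning strategy if some admissible sequence of moves produces at least $f(B)/4$ green triangles, where $f(B)$ is the number of triangles of $B$. *)

theory Defs
  imports Main
begin

text \<open>A simplicial 2-sphere is represented by its set of triangles (3-element vertex sets).\<close>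

definition vertices :: "'a set set \<Rightarrow> 'a set" where
  "vertices B = \<Union>B"

definition edges :: "'a set set \<Rightarrow> 'a set set" where
  "edges B = {e. card e = 2 \<and> (\<exists>t\<in>B. e \<subseteq> t)}"

text \<open>Game states: (red vertices, red edges, green triangles).\<close>
inductive game_reach :: "'a set set \<Rightarrow> 'a set \<Rightarrow> 'a set set \<Rightarrow> 'a set set \<Rightarrow> bool"
  for B where
  start: "\<lbrakk>S \<subseteq> vertices B; card S = 1 \<or> card S = 2\<rbrakk> \<Longrightarrow> game_reach B S {} {}"
| move: "\<lbrakk>game_reach B R E G; {u, v} \<in> edges B; u \<notin> R; v \<notin> R; w \<in> R; {u, v, w} \<in> B\<rbrakk>
         \<Longrightarrow> game_reach B (R \<union> {u, v}) (insert {u, v} E) (insert {u, v, w} G)"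

definition winning :: "'a set set \<Rightarrow> bool" where
  "winning B \<longleftrightarrow> (\<exists>R E G. game_reach B R E G \<and> 4 * card G \<ge> card B)"

definition stellar_tri :: "'a set \<Rightarrow> 'a \<Rightarrow> 'a set set" where
  "stellar_tri t v = {{a, b, v} | a b. a \<in> t \<and> b \<in> t \<and> a \<noteq> b}"

text \<open>Bipyramid: equator 1,2,3, apexes 4,5.\<close>
definition bipyramid_tris :: "nat set list" where
  "bipyramid_tris = [{4,1,2},{4,2,3},{4,3,1},{5,1,2},{5,2,3},{5,3,1}]"

definition bipyramid :: "nat set set" where
  "bipyramid = set bipyramid_tris"

definition B_stellar :: "nat set set" where
  "B_stellar = (\<Union>i<6. stellar_tri (bipyramid_tris ! i) (6 + i))"

end

theory Submission
  imports Defs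
begin

text \<open>Every triangle of the subdivided bipyramid contains two of the five original vertices.
  An edge colored in a move has uncolored endpoints and spans a triangle with a red vertex, so
  each move turns at least one original vertex red, and the first move already leaves two original
  vertices red. Hence after \<open>k \<ge> 1\<close> moves at least \<open>k + 1\<close> of the five original vertices are red,
  so at most four moves are possible, and each move produces one green triangle.\<close>

lemma game_reach_finite: "game_reach B R E G \<Longrightarrow> finite E \<and> finite G"
  by (induction rule: game_reach.induct) auto

lemma game_reach_red_edges_subset: "game_reach B R E G \<Longrightarrow> \<Union>E \<subseteq> R"
  by (induction rule: game_reach.induct) auto

lemma game_reach_move_card_red_edges:
  assumes "game_reach B R E G" "u \<notin> R"
  shows "card (insert {u, v} E) = Suc (card E)"
proof -
  have "{u, v} \<notin> E"
    using game_reach_red_edges_subset[OF assms(1)] assms(2) by blast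
  then show ?thesis
    using game_reach_finite[OF assms(1)] by simp
qed

lemma game_reach_card_green_le_card_red_edges:
  "game_reach B R E G \<Longrightarrow> card G \<le> card E"
proof (induction rule: game_reach.induct)
  case (start S)
  then show ?case by simp
next
  case (move R E G u v w)
  have "card (insert {u, v, w} G) \<le> Suc (card G)"
    using game_reach_finite[OF move.hyps(1)] by (simp add: card_insert_if)
  also have "\<dots> \<le> card (insert {u, v} E)"
    using move.IH game_reach_move_card_red_edges[OF move.hyps(1,3)] by simp
  finally show ?case .
qed

lemma game_reach_card_red_edges_less:
  assumes two_in_V: "\<And>t. t \<in> B \<Longrightarrow> 2 \<le> card (t \<inter> V)" and "finite V"
    and "game_reach B R E G" "E \<noteq> {}"
  shows "card E < card (R \<inter> V)"
  using assms(3,4)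
proof (induction rule: game_reach.induct)
  case (start S)
  then show ?case by simp
next
  case (move R E G u v w)
  let ?R' = "R \<union> {u, v}"
  have "2 \<le> card ({u, v, w} \<inter> V)"
    using two_in_V move.hyps(6) .
  moreover have "card ({u, v, w} \<inter> V) \<le> 1" if "{u, v} \<inter> V = {}"
  proof -
    have "{u, v, w} \<inter> V \<subseteq> {w}"
      using that by blast
    then show ?thesis
      using card_mono[of "{w}"] by simp
  qed
  ultimately have "{u, v} \<inter> V \<noteq> {}"
    by linarith
  then have "R \<inter> V \<subset> ?R' \<inter> V"
    using move.hyps(3,4) by blast
  then have grows: "card (R \<inter> V) < card (?R' \<inter> V)"
    using \<open>finite V\<close> by (simp add: psubset_card_mono)
  have card_E': "card (insert {u, v} E) = Suc (card E)"
    using game_reach_move_card_red_edges[OF move.hyps(1,3)] .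
  show ?case
  proof (cases "E = {}")
    case True
    have "{u, v, w} \<inter> V \<subseteq> ?R' \<inter> V"
      using move.hyps(5) by blast
    then have "card ({u, v, w} \<inter> V) \<le> card (?R' \<inter> V)"
      using \<open>finite V\<close> by (simp add: card_mono)
    then have "2 \<le> card (?R' \<inter> V)"
      using \<open>2 \<le> card ({u, v, w} \<inter> V)\<close> by linarith
    then show ?thesis
      using card_E' True by simp
  next
    case False
    then show ?thesis
      using move.IH card_E' grows by simp
  qed
qed

lemma stellar_tri_two_in:
  assumes "t \<subseteq> V" "s \<in> stellar_tri t v"
  shows "2 \<le> card (s \<inter> V)"
proof -
  obtain a b where s: "s = {a, b, v}" and "a \<in> t" "b \<in> t" "a \<noteq> b"
    using assms(2) unfolding stellar_tri_def by blast
  with assms(1) have "{a, b} \<subseteq> s \<inter> V"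
    by auto
  then have "card {a, b} \<le> card (s \<inter> V)"
    by (rule card_mono[rotated]) (simp add: s)
  with \<open>a \<noteq> b\<close> show ?thesis
    by simp
qed

lemma B_stellar_two_in_bipyramid:
  assumes "t \<in> B_stellar"
  shows "2 \<le> card (t \<inter> {1..5})"
proof -
  obtain i where "i < 6" and t: "t \<in> stellar_tri (bipyramid_tris ! i) (6 + i)"
    using assms unfolding B_stellar_def by blast
  have "bipyramid_tris ! i \<subseteq> {1..5}"
    using \<open>i < 6\<close> unfolding bipyramid_tris_def
    by (auto simp: less_Suc_eq numeral_eq_Suc)
  then show ?thesis
    using t by (rule stellar_tri_two_in)
qed

lemma B_stellar_explicit:
  "B_stellar = {{4,1,6}, {4,2,6}, {1,2,6}, {4,2,7}, {4,3,7}, {2,3,7},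
    {4,3,8}, {4,1,8}, {3,1,8}, {5,1,9}, {5,2,9}, {1,2,9}, {5,2,10}, {5,3,10}, {2,3,10},
    {5,3,11}, {5,1,11}, {3,1,11}}"
proof -
  have stellar_tri_triangle:
    "stellar_tri {a, b, c} v = {{a, b, v}, {a, c, v}, {b, c, v}}" if "distinct [a, b, c]"
    for a b c v :: nat
    using that unfolding stellar_tri_def by (auto simp: insert_commute)
  have "{..<6::nat} = {0, 1, 2, 3, 4, 5}"
    by auto
  then show ?thesis
    unfolding B_stellar_def bipyramid_tris_def
    by (simp add: stellar_tri_triangle insert_commute)
qed

lemma card_B_stellar: "card B_stellar = 18"
  unfolding B_stellar_explicit by code_simp

theorem mainTheorem13:
  shows "card B_stellar = 18
    \<and> (\<forall>R E G. game_reach B_stellar R E G \<longrightarrow> card E \<le> 4 \<and> card G \<le> 4)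
    \<and> \<not> winning B_stellar"
proof -
  have bound: "card E \<le> 4 \<and> card G \<le> 4" if "game_reach B_stellar R E G" for R E G
  proof -
    have "card (R \<inter> {1..5}) \<le> card {1..5::nat}"
      by (rule card_mono) auto
    then have "card E \<le> 4"
      using game_reach_card_red_edges_less[OF B_stellar_two_in_bipyramid _ that]
      by (cases "E = {}") auto
    then show ?thesis
      using game_reach_card_green_le_card_red_edges[OF that] by simp
  qed
  then have "\<not> winning B_stellar"
    unfolding winning_def card_B_stellar by fastforce
  with bound card_B_stellar show ?thesis
    by blast
qed

end
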